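(* Let $\mathcal{D}$ be a derivation in $\mathbf{Reg}$ (respectively in $\mathbf{Reg}^{+}$) with conclusion $\lambda\vec{x}.M$. Then every path in $\mathcal{D}$ from the conclusion upwards corresponds to a $\to_{\mathrm{reg}}$-rewrite sequence (respectively a $\to_{\mathrm{reg}^+}$-rewrite sequence) starting at $\lambda\vec{x}.M$, where passes over instances of (FIX) correspond to empty steps, passes over instances of $(@)$ to the left premise and to the right premise correspond to $\to_{@_0}$- and $\to_{@_1}$-steps respectively, and passes over instances of $(\lambda)$ and of $(\mathrm{del})$ (respectively $(\mathrm{del}^+)$) correspond to $\to_{\lambda}$-steps and $\to_{\mathrm{compress}}$-steps (respectively $\to_{\mathrm{del}^+}$-steps). The same holds for (finite or infinite) cyclic paths in $\mathcal{D}$ that return, possibly repeatedly, from a marked assumption at the top down to the conclusion of the instance of (FIX) at which that assumption is discharged.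
   Context: Infinite $\lambda$-terms are possibly infinite terms built from variables, abstractions and applications, modulo $\alpha$-equivalence. A prefixed term is $\lambda x_1\ldots x_n.M$ ($n\ge0$, distinct variables, a separate abstraction prefix) with $M$ an infinite $\lambda$-term whose free variables are among the $x_i$. Proof system $\mathbf{Reg}^{+}$ (finite natural-deduction trees of prefixed terms): axiom (nlvar) $\lambda\vec{x}y.y$; $(\lambda)$: from $\lambda\vec{x}y.M_0$ infer $\lambda\vec{x}.\lambda y.M_0$; $(@)$: from $\lambda\vec{x}.M_0$ (left premise) and $\lambda\vec{x}.M_1$ (right premise) infer $\lambda\vec{x}.(M_0\,M_1)$; $(\mathrm{del}^{+})$: from $\lambda x_1\ldots x_{n-1}.M$ infer $\lambda x_1\ldots x_n.M$ if $x_n$ is not free in $M$; (FIX,$u$): from a derivation $\mathcal{D}_0$ of depth $\ge1$ of $\lambda\vec{x}.M$ possibly using open assumptions $[\lambda\vec{x}.M]^u$, infer $\lambda\vec{x}.M$ discharging them. $\mathbf{Reg}$: as $\mathbf{Reg}^{+}$ but with axiom only $\lambda y.y$ and with $(\mathrm{del}^{+})$ replaced by $(\mathrm{del})$: from $\lambda x_1\ldots x_{i-1}x_{i+1}\ldots x_n.M$ infer $\lambda x_1\ldots x_n.M$ if $x_i$ is not free in $M$. Rewrite relations on prefixed terms: $\lambda\vec{x}.\lambda y.M\to_{\lambda}\lambda\vec{x}y.M$; $\lambda\vec{x}.(M_0\,M_1)\to_{@_i}\lambda\vec{x}.M_i$ for $i\in\{0,1\}$; $\lambda x_1\ldots x_n.M\to_{\mathrm{compress}}\lambda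 x_1\ldots x_{i-1}x_{i+1}\ldots x_n.M$ if $x_i$ not free in $M$; $\lambda x_1\ldots x_n.M\to_{\mathrm{del}^+}\lambda x_1\ldots x_{n-1}.M$ if $x_n$ not free in $M$. $\to_{\mathrm{reg}}$ is the union of $\to_\lambda,\to_{@_0},\to_{@_1},\to_{\mathrm{compress}}$; $\to_{\mathrm{reg}^+}$ is the union of $\to_\lambda,\to_{@_0},\to_{@_1},\to_{\mathrm{del}^+}$. *)

theory Defs
  imports Main "HOL-Library.Extended_Nat"
begin

codatatype trm = Var nat | Lam trm | App trm trm

text \<open>Index k occurs free in M (free occurrences lie at finite depth).\<close>
inductive free_in :: "nat \<Rightarrow> trm \<Rightarrow> bool" where
  "free_in k (Var k)"
| "free_in (Suc k) M \<Longrightarrow> free_in k (Lam M)"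
| "free_in k M \<Longrightarrow> free_in k (App M N)"
| "free_in k N \<Longrightarrow> free_in k (App M N)"

definition liftr :: "(nat \<Rightarrow> nat) \<Rightarrow> nat \<Rightarrow> nat" where
  "liftr f j = (case j of 0 \<Rightarrow> 0 | Suc j' \<Rightarrow> Suc (f j'))"

primcorec ren :: "(nat \<Rightarrow> nat) \<Rightarrow> trm \<Rightarrow> trm" where
  "ren f M = (case M of Var j \<Rightarrow> Var (f j)
                       | Lam N \<Rightarrow> Lam (ren (liftr f) N)
                       | App a b \<Rightarrow> App (ren f a) (ren f b))"

text \<open>Renumbering after removing the (not free) index d.\<close>
definition drop_var :: "nat \<Rightarrow> nat \<Rightarrow> nat" where
  "drop_var d j = (if j < d then j else j - 1)"

text \<open>PT n M stands for \<lambda>x1...xn.M, where x_i is de Bruijn index n - i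
  at top level of M (x_n is index 0).\<close>
datatype ptrm = PT nat trm

fun prefixed :: "ptrm \<Rightarrow> bool" where
  "prefixed (PT n M) = (\<forall>k. free_in k M \<longrightarrow> k < n)"

inductive lam_step :: "ptrm \<Rightarrow> ptrm \<Rightarrow> bool" where
  "lam_step (PT n (Lam M)) (PT (Suc n) M)"

inductive app0_step :: "ptrm \<Rightarrow> ptrm \<Rightarrow> bool" where
  "app0_step (PT n (App M0 M1)) (PT n M0)"

inductive app1_step :: "ptrm \<Rightarrow> ptrm \<Rightarrow> bool" where
  "app1_step (PT n (App M0 M1)) (PT n M1)"

text \<open>Remove x_i, i.e. de Bruijn index d = n - i.\<close>
inductive compress_step :: "ptrm \<Rightarrow> ptrm \<Rightarrow> bool" where
  "d < n \<Longrightarrow> \<not> free_in d M \<Longrightarrow> compress_step (PT n M) (PT (n - 1) (ren (drop_var d) M))"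

inductive delp_step :: "ptrm \<Rightarrow> ptrm \<Rightarrow> bool" where
  "\<not> free_in 0 M \<Longrightarrow> delp_step (PT (Suc n) M) (PT n (ren (drop_var 0) M))"

definition reg_step :: "ptrm \<Rightarrow> ptrm \<Rightarrow> bool" where
  "reg_step A B \<longleftrightarrow> lam_step A B \<or> app0_step A B \<or> app1_step A B \<or> compress_step A B"

definition regp_step :: "ptrm \<Rightarrow> ptrm \<Rightarrow> bool" where
  "regp_step A B \<longleftrightarrow> lam_step A B \<or> app0_step A B \<or> app1_step A B \<or> delp_step A B"

datatype sys = Reg | RegPlus

text \<open>Derivation trees; every node carries its conclusion.
  Asm u A is a marked assumption [A]^u; RFix u A D is (FIX,u).\<close>
datatype dtree =
    Axm ptrm
  | Asm nat ptrm
  | RLam ptrm dtree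
  | RApp ptrm dtree dtree
  | RDel ptrm dtree
  | RFix nat ptrm dtree

fun concl :: "dtree \<Rightarrow> ptrm" where
  "concl (Axm A) = A"
| "concl (Asm u A) = A"
| "concl (RLam A D) = A"
| "concl (RApp A D0 D1) = A"
| "concl (RDel A D) = A"
| "concl (RFix u A D) = A"

fun is_leaf :: "dtree \<Rightarrow> bool" where
  "is_leaf (Axm A) = True"
| "is_leaf (Asm u A) = True"
| "is_leaf _ = False"

text \<open>deriv s \<Gamma> D: D is a derivation in system s whose open assumptions
  with marker u are of the form \<Gamma> u.\<close>
inductive deriv :: "sys \<Rightarrow> (nat \<Rightarrow> ptrm option) \<Rightarrow> dtree \<Rightarrow> bool" where
  ax_reg: "deriv Reg \<Gamma> (Axm (PT 1 (Var 0)))"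
| ax_regp: "deriv RegPlus \<Gamma> (Axm (PT (Suc n) (Var 0)))"
| asm_rule: "\<Gamma> u = Some A \<Longrightarrow> prefixed A \<Longrightarrow> deriv s \<Gamma> (Asm u A)"
| lam_rule: "deriv s \<Gamma> D \<Longrightarrow> concl D = PT (Suc n) M \<Longrightarrow> deriv s \<Gamma> (RLam (PT n (Lam M)) D)"
| app_rule: "deriv s \<Gamma> D0 \<Longrightarrow> deriv s \<Gamma> D1 \<Longrightarrow> concl D0 = PT n M0 \<Longrightarrow> concl D1 = PT n M1 \<Longrightarrow>
        deriv s \<Gamma> (RApp (PT n (App M0 M1)) D0 D1)"
| del_rule: "deriv Reg \<Gamma> D \<Longrightarrow> prefixed (PT n M) \<Longrightarrow> d < n \<Longrightarrow> \<not> free_in d M \<Longrightarrow>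
        concl D = PT (n - 1) (ren (drop_var d) M) \<Longrightarrow> deriv Reg \<Gamma> (RDel (PT n M) D)"
| delp_rule: "deriv RegPlus \<Gamma> D \<Longrightarrow> prefixed (PT (Suc n) M) \<Longrightarrow> \<not> free_in 0 M \<Longrightarrow>
        concl D = PT n (ren (drop_var 0) M) \<Longrightarrow> deriv RegPlus \<Gamma> (RDel (PT (Suc n) M) D)"
| fix_rule: "deriv s (\<Gamma>(u \<mapsto> A)) D \<Longrightarrow> concl D = A \<Longrightarrow> \<not> is_leaf D \<Longrightarrow>
        deriv s \<Gamma> (RFix u A D)"

text \<open>Positions: lists of premise indices (0 = left/only premise, 1 = right premise).\<close>
fun subtree :: "dtree \<Rightarrow> nat list \<Rightarrow> dtree option" where
  "subtree D [] = Some D"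
| "subtree (RLam A D) (0 # p) = subtree D p"
| "subtree (RApp A D0 D1) (0 # p) = subtree D0 p"
| "subtree (RApp A D0 D1) (Suc 0 # p) = subtree D1 p"
| "subtree (RDel A D) (0 # p) = subtree D p"
| "subtree (RFix u A D) (0 # p) = subtree D p"
| "subtree _ _ = None"

definition concl_at :: "dtree \<Rightarrow> nat list \<Rightarrow> ptrm" where
  "concl_at D p = concl (the (subtree D p))"

definition fix_at :: "dtree \<Rightarrow> nat list \<Rightarrow> nat \<Rightarrow> bool" where
  "fix_at D q u \<longleftrightarrow> (\<exists>A D'. subtree D q = Some (RFix u A D'))"

text \<open>Back edge from a marked assumption [A]^u at position p to the instance
  of (FIX,u) discharging it (the nearest one below it).\<close>
definition back_edge :: "dtree \<Rightarrow> nat list \<Rightarrow> nat list \<Rightarrow> bool" where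
  "back_edge D p q \<longleftrightarrow> (\<exists>u A k. subtree D p = Some (Asm u A) \<and> k < length p \<and>
      q = take k p \<and> fix_at D q u \<and>
      (\<forall>k'. k < k' \<and> k' < length p \<longrightarrow> \<not> fix_at D (take k' p) u))"

datatype lbl = LEmpty | LLam | LApp0 | LApp1 | LDel

inductive edge :: "dtree \<Rightarrow> nat list \<Rightarrow> lbl \<Rightarrow> nat list \<Rightarrow> bool" where
  "subtree D p = Some (RLam A D1) \<Longrightarrow> edge D p LLam (p @ [0])"
| "subtree D p = Some (RApp A D0 D1) \<Longrightarrow> edge D p LApp0 (p @ [0])"
| "subtree D p = Some (RApp A D0 D1) \<Longrightarrow> edge D p LApp1 (p @ [1])"
| "subtree D p = Some (RDel A D1) \<Longrightarrow> edge D p LDel (p @ [0])"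
| "subtree D p = Some (RFix u A D1) \<Longrightarrow> edge D p LEmpty (p @ [0])"
| "back_edge D p q \<Longrightarrow> edge D p LEmpty q"

fun step_of :: "sys \<Rightarrow> lbl \<Rightarrow> ptrm \<Rightarrow> ptrm \<Rightarrow> bool" where
  "step_of s LEmpty A B = (A = B)"
| "step_of s LLam A B = lam_step A B"
| "step_of s LApp0 A B = app0_step A B"
| "step_of s LApp1 A B = app1_step A B"
| "step_of Reg LDel A B = compress_step A B"
| "step_of RegPlus LDel A B = delp_step A B"

end

theory Submission
  imports Defs
begin

text \<open>Each rule instance rewrites its conclusion to its premise by the corresponding step, so
  downward edges of a path are steps. For a back edge, record along the path from the root every
  (FIX,u) passed: a subderivation is a derivation in the context so enlarged, and that context maps
  u to the conclusion of the innermost (FIX,u) passed. Hence a marked assumption [A]^u has the same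
  conclusion as the (FIX,u) instance that discharges it, and the back edge is an empty step.\<close>

lemma subtree_append: "subtree D p = Some X \<Longrightarrow> subtree D (p @ q) = subtree X q"
  by (induction D p rule: subtree.induct) auto

fun ctx_along :: "(nat \<Rightarrow> ptrm option) \<Rightarrow> dtree \<Rightarrow> nat list \<Rightarrow> nat \<Rightarrow> ptrm option" where
  "ctx_along \<Gamma> (RFix u A D) (0 # p) = ctx_along (\<Gamma>(u \<mapsto> A)) D p"
| "ctx_along \<Gamma> (RLam A D) (0 # p) = ctx_along \<Gamma> D p"
| "ctx_along \<Gamma> (RApp A D0 D1) (0 # p) = ctx_along \<Gamma> D0 p"
| "ctx_along \<Gamma> (RApp A D0 D1) (Suc 0 # p) = ctx_along \<Gamma> D1 p"
| "ctx_along \<Gamma> (RDel A D) (0 # p) = ctx_along \<Gamma> D p"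
| "ctx_along \<Gamma> _ _ = \<Gamma>"

lemma deriv_subtree:
  "deriv s \<Gamma> D \<Longrightarrow> subtree D p = Some X \<Longrightarrow> deriv s (ctx_along \<Gamma> D p) X"
  by (induction D p arbitrary: \<Gamma> rule: subtree.induct) (auto elim: deriv.cases)

lemma ctx_along_no_fix:
  "subtree D p \<noteq> None \<Longrightarrow> \<forall>k < length p. \<not> fix_at D (take k p) u \<Longrightarrow>
   ctx_along \<Gamma> D p u = \<Gamma> u"
  by (induction \<Gamma> D p rule: ctx_along.induct) (auto simp: fix_at_def All_less_Suc2)

lemma ctx_along_append:
  "subtree D p = Some X \<Longrightarrow> ctx_along \<Gamma> D (p @ q) = ctx_along (ctx_along \<Gamma> D p) X q"
  by (induction \<Gamma> D p rule: ctx_along.induct) (auto elim: subtree.elims)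

lemma ctx_along_at_fix:
  assumes "subtree D p = Some (RFix u A D')" and "subtree D' q \<noteq> None"
    and "\<forall>k < length q. \<not> fix_at D' (take k q) u"
  shows "ctx_along \<Gamma> D (p @ 0 # q) u = Some A"
  using assms by (simp add: ctx_along_append ctx_along_no_fix)

lemma back_edge_concl_at:
  assumes "deriv s \<Gamma> D" and "back_edge D p q"
  shows "concl_at D p = concl_at D q"
proof -
  obtain u A k where asm: "subtree D p = Some (Asm u A)" and q: "q = take k p"
    and "k < length p" and "fix_at D q u"
    and nearest: "\<forall>k'. k < k' \<and> k' < length p \<longrightarrow> \<not> fix_at D (take k' p) u"
    using assms(2) unfolding back_edge_def by blast
  then obtain B D' where discharge: "subtree D q = Some (RFix u B D')"
    unfolding fix_at_def by blast
  have "subtree (RFix u B D') (drop k p) = Some (Asm u A)"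
    using asm subtree_append[OF discharge, of "drop k p"] q by simp
  with \<open>k < length p\<close> obtain r where r: "drop k p = 0 # r" and asm': "subtree D' r = Some (Asm u A)"
    by (cases "drop k p") (auto elim: subtree.elims)
  have p: "p = q @ 0 # r"
    using q r by (metis append_take_drop_id)
  have "length q = k"
    using q \<open>k < length p\<close> by simp
  have "\<not> fix_at D' (take j r) u" if "j < length r" for j
  proof -
    have "take (k + Suc j) p = q @ 0 # take j r"
      using \<open>length q = k\<close> unfolding p by simp
    moreover have "k + Suc j < length p"
      using that \<open>length q = k\<close> unfolding p by simp
    ultimately have "\<not> fix_at D (q @ 0 # take j r) u"
      using nearest[rule_format, of "k + Suc j"] by simp
    then show ?thesis
      by (simp add: fix_at_def subtree_append[OF discharge])
  qed
  then have "ctx_along \<Gamma> D p u = Some B"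
    using ctx_along_at_fix[OF discharge] asm' p by simp
  moreover have "ctx_along \<Gamma> D p u = Some A"
    using deriv_subtree[OF assms(1) asm] by (cases rule: deriv.cases) auto
  ultimately show ?thesis
    using asm discharge by (simp add: concl_at_def)
qed

lemma edge_step_of:
  assumes d: "deriv s \<Gamma> D" and e: "edge D p l q"
  shows "step_of s l (concl_at D p) (concl_at D q)"
  using e
proof cases
  case (1 A D1)
  with deriv_subtree[OF d] have node: "deriv s (ctx_along \<Gamma> D p) (RLam A D1)" by blast
  from node show ?thesis using 1
    by (cases rule: deriv.cases) (auto simp: concl_at_def subtree_append intro: lam_step.intros)
next
  case (2 A D0 D1)
  with deriv_subtree[OF d] have node: "deriv s (ctx_along \<Gamma> D p) (RApp A D0 D1)" by blast
  from node show ?thesis using 2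
    by (cases rule: deriv.cases) (auto simp: concl_at_def subtree_append intro: app0_step.intros)
next
  case (3 A D0 D1)
  with deriv_subtree[OF d] have node: "deriv s (ctx_along \<Gamma> D p) (RApp A D0 D1)" by blast
  from node show ?thesis using 3
    by (cases rule: deriv.cases) (auto simp: concl_at_def subtree_append intro: app1_step.intros)
next
  case (4 A D1)
  with deriv_subtree[OF d] have node: "deriv s (ctx_along \<Gamma> D p) (RDel A D1)" by blast
  from node show ?thesis using 4
    by (cases rule: deriv.cases)
      (auto simp: concl_at_def subtree_append intro: compress_step.intros[simplified] delp_step.intros)
next
  case (5 u A D1)
  with deriv_subtree[OF d] have node: "deriv s (ctx_along \<Gamma> D p) (RFix u A D1)" by blast
  from node show ?thesis using 5
    by (cases rule: deriv.cases) (auto simp: concl_at_def subtree_append)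
next
  case 6
  with back_edge_concl_at[OF d] show ?thesis by simp
qed

lemma step_of_Reg: "step_of Reg l A B \<Longrightarrow> l = LEmpty \<or> reg_step A B"
  by (cases l) (auto simp: reg_step_def)

lemma step_of_RegPlus: "step_of RegPlus l A B \<Longrightarrow> l = LEmpty \<or> regp_step A B"
  by (cases l) (auto simp: regp_step_def)

theorem mainTheorem2:
  fixes s :: sys and \<Gamma> :: "nat \<Rightarrow> ptrm option" and D :: dtree
    and ps :: "nat \<Rightarrow> nat list" and ls :: "nat \<Rightarrow> lbl" and len :: enat
  assumes "deriv s \<Gamma> D"
    and "ps 0 = []"
    and "\<forall>i. enat i < len \<longrightarrow> edge D (ps i) (ls i) (ps (Suc i))"
  shows "\<forall>i. enat i < len \<longrightarrow>
           step_of s (ls i) (concl_at D (ps i)) (concl_at D (ps (Suc i))) \<and>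
           (if s = Reg then (ls i = LEmpty \<or> reg_step (concl_at D (ps i)) (concl_at D (ps (Suc i))))
            else (ls i = LEmpty \<or> regp_step (concl_at D (ps i)) (concl_at D (ps (Suc i)))))"
proof (intro allI impI)
  fix i assume "enat i < len"
  then have "step_of s (ls i) (concl_at D (ps i)) (concl_at D (ps (Suc i)))"
    using edge_step_of[OF assms(1)] assms(3) by blast
  then show "step_of s (ls i) (concl_at D (ps i)) (concl_at D (ps (Suc i))) \<and>
      (if s = Reg then (ls i = LEmpty \<or> reg_step (concl_at D (ps i)) (concl_at D (ps (Suc i))))
       else (ls i = LEmpty \<or> regp_step (concl_at D (ps i)) (concl_at D (ps (Suc i)))))"
    by (cases s) (auto dest: step_of_Reg step_of_RegPlus)
qed

end
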